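(* Let $R>r\ge1$ and let $f,g:\mathbb{D}_{R}\to\mathbb{C}$ be analytic in $\mathbb{D}_{R}=\{z\in\mathbb{C}:|z|<R\}$, $f(z)=\sum_{k=0}^{\infty}a_{k}z^{k}$, $g(z)=\sum_{k=0}^{\infty}b_{k}z^{k}$. Then there is a constant $C(r,f,g)$, independent of $n$, such that for all $n\in\mathbb{N}$ and all $|z|\le r$, $$\left|B_{n}(fg)(z)-B_{n}(f)(z)B_{n}(g)(z)-\frac{z(1-z)f'(z)g'(z)}{n}\right|\le\frac{C(r,f,g)}{n^{2}}.$$
   Context: For a function $h$ defined on $[0,1]$, the complex Bernstein polynomials are $B_{n}(h)(z)=\sum_{k=0}^{n}\binom{n}{k}z^{k}(1-z)^{n-k}h(k/n)$, $z\in\mathbb{C}$. *)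

theory Defs
  imports "HOL-Complex_Analysis.Complex_Analysis"
begin

text \<open>Complex Bernstein polynomial of a function h defined on [0,1]
  (values of h outside [0,1] are never used).\<close>
definition bernstein :: "nat \<Rightarrow> (real \<Rightarrow> complex) \<Rightarrow> complex \<Rightarrow> complex" where
  "bernstein n h z = (\<Sum>k=0..n. of_nat (n choose k) * z ^ k * (1 - z) ^ (n - k) * h (real k / real n))"

end

theory Submission
  imports Defs "HOL-Combinatorics.Stirling" "HOL-Real_Asymp.Real_Asymp"
begin

text \<open>
  By the Stirling expansion \<open>m\<^sup>k = \<Sum>i\<le>k. S(k,i) i! (m choose i)\<close>, the Bernstein polynomial of
  \<open>x\<^sup>k\<close> is a convex combination \<open>\<Sum>i\<le>k. w\<^sub>k\<^sub>,\<^sub>i z\<^sup>i\<close> whose top weight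
  \<open>n(n-1)\<cdots>(n-k+1)/n\<^sup>k\<close> is at least \<open>1 - \<sigma>\<^sub>k\<close>, where \<open>\<sigma>\<^sub>k = k(k-1)/(2n)\<close>, and whose
  next weight is \<open>\<sigma>\<^sub>k\<close> times the top weight for \<open>k-1\<close>. Hence, for \<open>|z| \<le> r\<close>,
  \<open>B\<^sub>n(x\<^sup>k) = z\<^sup>k + \<sigma>\<^sub>k (z\<^sup>k\<^sup>-\<^sup>1 - z\<^sup>k) + O(\<sigma>\<^sub>k\<^sup>2 r\<^sup>k)\<close>. Since
  \<open>\<sigma>\<^sub>j\<^sub>+\<^sub>k - \<sigma>\<^sub>j - \<sigma>\<^sub>k = jk/n\<close>, the first-order terms of
  \<open>B\<^sub>n(x\<^sup>j\<^sup>+\<^sup>k) - B\<^sub>n(x\<^sup>j) B\<^sub>n(x\<^sup>k)\<close> are exactly \<open>z(1-z)(x\<^sup>j)'(x\<^sup>k)'/n\<close>, and the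
  remaining defect is \<open>O((j+1)\<^sup>4 (k+1)\<^sup>4 r\<^sup>j\<^sup>+\<^sup>k / n\<^sup>2)\<close>. The defect is bilinear in the pair
  of functions; by the Cauchy estimates the Taylor coefficients satisfy
  \<open>\<Sum>j. |a\<^sub>j| (j+1)\<^sup>4 r\<^sup>j < \<infinity>\<close>, so the monomial bounds sum to \<open>C/n\<^sup>2\<close>.
\<close>

section \<open>Bernstein polynomials of monomials\<close>

lemma Suc_times_binomial_eq_diff: "Suc k * (n choose Suc k) = (n - k) * (n choose k)"
  by (simp only: binomial_absorption binomial_absorb_comp)

lemma mult_binomial_eq: "m * (m choose i) = Suc i * (m choose Suc i) + i * (m choose i)"
proof (cases "i \<le> m")
  case True
  have "Suc i * (m choose Suc i) + i * (m choose i) = (m - i + i) * (m choose i)"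
    by (simp only: Suc_times_binomial_eq_diff add_mult_distrib)
  with True show ?thesis by simp
qed (simp add: binomial_eq_0)

lemma power_eq_sum_Stirling_binomial:
  "m ^ k = (\<Sum>i\<le>k. Stirling k i * fact i * (m choose i))"
proof (induction k)
  case (Suc k)
  define h where "h i = i * Stirling k i * fact i * (m choose i)" for i
  have "m ^ Suc k = (\<Sum>i\<le>k. Stirling k i * fact i * (m * (m choose i)))"
    by (simp add: Suc sum_distrib_left algebra_simps)
  also have "\<dots> = (\<Sum>i\<le>k. Stirling k i * fact (Suc i) * (m choose Suc i)) + (\<Sum>i\<le>k. h i)"
    unfolding sum.distrib[symmetric] h_def
    by (intro sum.cong) (simp_all add: mult_binomial_eq algebra_simps)
  also have "(\<Sum>i\<le>k. h i) = (\<Sum>i\<le>k. h (Suc i))"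
    using sum.atMost_Suc_shift[of h k] by (simp add: h_def)
  also have "(\<Sum>i\<le>k. Stirling k i * fact (Suc i) * (m choose Suc i)) + (\<Sum>i\<le>k. h (Suc i))
      = (\<Sum>i\<le>k. Stirling (Suc k) (Suc i) * fact (Suc i) * (m choose Suc i))"
    by (simp add: h_def sum.distrib[symmetric] algebra_simps del: fact_Suc)
  also have "\<dots> = (\<Sum>i\<le>Suc k. Stirling (Suc k) i * fact i * (m choose i))"
    by (subst sum.atMost_Suc_shift) simp
  finally show ?case .
qed simp

definition bernstein_basis :: "nat \<Rightarrow> nat \<Rightarrow> complex \<Rightarrow> complex" where
  "bernstein_basis n m z = of_nat (n choose m) * z ^ m * (1 - z) ^ (n - m)"

lemma bernstein_eq_sum_basis:
  "bernstein n h z = (\<Sum>m\<le>n. bernstein_basis n m z * h (real m / real n))"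
  unfolding bernstein_def bernstein_basis_def atLeast0AtMost by (simp add: mult.assoc)

lemma sum_bernstein_basis_mult_binomial:
  "(\<Sum>m\<le>n. bernstein_basis n m z * of_nat (m choose i)) = of_nat (n choose i) * z ^ i"
proof (cases "i \<le> n")
  case True
  have "(\<Sum>m\<le>n. bernstein_basis n m z * of_nat (m choose i))
      = (\<Sum>m=i..n. bernstein_basis n m z * of_nat (m choose i))"
    by (rule sum.mono_neutral_right) auto
  also have "\<dots> = (\<Sum>t\<le>n-i. bernstein_basis n (t+i) z * of_nat ((t+i) choose i))"
    using sum.shift_bounds_cl_nat_ivl[of _ 0 i "n-i"] True by (simp add: atLeast0AtMost)
  also have "\<dots> = (\<Sum>t\<le>n-i. of_nat (n choose i) * z ^ i *
                      (of_nat ((n-i) choose t) * z ^ t * (1-z) ^ (n - i - t)))"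
  proof (rule sum.cong[OF refl])
    fix t assume "t \<in> {..n-i}"
    then have "(n choose (t+i)) * ((t+i) choose i) = (n choose i) * ((n-i) choose t)"
      using choose_mult[of i "t+i" n] True by simp
    then have "(of_nat (n choose (t+i)) :: complex) * of_nat ((t+i) choose i)
        = of_nat (n choose i) * of_nat ((n-i) choose t)"
      by (metis of_nat_mult)
    then show "bernstein_basis n (t+i) z * of_nat ((t+i) choose i) = of_nat (n choose i) * z ^ i *
                (of_nat ((n-i) choose t) * z ^ t * (1-z) ^ (n - i - t))"
      unfolding bernstein_basis_def by (simp add: power_add algebra_simps)
  qed
  also have "\<dots> = of_nat (n choose i) * z ^ i * (z + (1 - z)) ^ (n - i)"
    unfolding binomial_ring by (simp add: sum_distrib_left algebra_simps)
  finally show ?thesis by simp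
qed (auto intro!: sum.neutral simp: binomial_eq_0)

definition bernstein_power_coeff :: "nat \<Rightarrow> nat \<Rightarrow> nat \<Rightarrow> real" where
  "bernstein_power_coeff n k i = real (Stirling k i) * fact i * real (n choose i) / real n ^ k"

lemma bernstein_power_expansion:
  "bernstein n (\<lambda>x. of_real x ^ k) z = (\<Sum>i\<le>k. of_real (bernstein_power_coeff n k i) * z ^ i)"
proof -
  define c where "c i = (of_real (real (Stirling k i) * fact i / real n ^ k) :: complex)" for i
  have "(of_real (real m / real n) :: complex) ^ k = (\<Sum>i\<le>k. c i * of_nat (m choose i))" for m
  proof -
    have "(of_real (real m / real n) :: complex) ^ k = of_real (real m ^ k / real n ^ k)"
      by (simp add: power_divide)
    also have "\<dots> = of_real (\<Sum>i\<le>k. real (Stirling k i) * fact i / real n ^ k * real (m choose i))"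
      using arg_cong[OF power_eq_sum_Stirling_binomial[of m k], of real] by (simp add: sum_divide_distrib)
    finally show ?thesis
      by (simp add: c_def)
  qed
  then have "bernstein n (\<lambda>x. of_real x ^ k) z
      = (\<Sum>i\<le>k. c i * (\<Sum>m\<le>n. bernstein_basis n m z * of_nat (m choose i)))"
    unfolding bernstein_eq_sum_basis
    by (simp add: sum_distrib_left sum.swap[where A="{..n}"] algebra_simps)
  then show ?thesis
    by (simp add: sum_bernstein_basis_mult_binomial c_def bernstein_power_coeff_def mult.assoc)
qed

lemma bernstein_power_coeff_nonneg: "bernstein_power_coeff n k i \<ge> 0"
  unfolding bernstein_power_coeff_def by simp

lemma sum_bernstein_power_coeff:
  assumes "n \<ge> 1"
  shows "(\<Sum>i\<le>k. bernstein_power_coeff n k i) = 1"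
proof -
  have "(\<Sum>i\<le>k. bernstein_power_coeff n k i)
      = (\<Sum>i\<le>k. real (Stirling k i) * fact i * real (n choose i)) / real n ^ k"
    unfolding bernstein_power_coeff_def by (simp add: sum_divide_distrib)
  also have "(\<Sum>i\<le>k. real (Stirling k i) * fact i * real (n choose i)) = real n ^ k"
    using arg_cong[OF power_eq_sum_Stirling_binomial[of n k], of real] by simp
  also have "real n ^ k / real n ^ k = 1"
    using assms by simp
  finally show ?thesis .
qed

definition falling_ratio :: "nat \<Rightarrow> nat \<Rightarrow> real" where
  "falling_ratio n k = (\<Prod>i<k. 1 - real i / real n)"

definition bernstein_sigma :: "nat \<Rightarrow> nat \<Rightarrow> real" where
  "bernstein_sigma n k = real k * (real k - 1) / (2 * real n)"

lemma bernstein_sigma_nonneg: "bernstein_sigma n k \<ge> 0"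
  unfolding bernstein_sigma_def by (cases k) auto

lemma bernstein_sigma_le_Suc: "bernstein_sigma n k \<le> bernstein_sigma n (Suc k)"
proof -
  have "real k * (real k - 1) \<le> real (Suc k) * (real (Suc k) - 1)"
    by (simp add: algebra_simps)
  then show ?thesis
    unfolding bernstein_sigma_def by (intro divide_right_mono) auto
qed

lemma bernstein_sigma_le:
  assumes "m \<le> N"
  shows "bernstein_sigma n m \<le> real N ^ 2 / (2 * real n)"
proof -
  have "real m * (real m - 1) \<le> real m * real m"
    by (simp add: algebra_simps)
  also have "\<dots> \<le> real N * real N"
    using assms by (intro mult_mono) auto
  finally show ?thesis
    unfolding bernstein_sigma_def power2_eq_square by (intro divide_right_mono) auto
qed

lemma bernstein_power_coeff_diag:
  assumes "n \<ge> 1"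
  shows "bernstein_power_coeff n k k = falling_ratio n k"
proof (induction k)
  case (Suc k)
  have "real (Suc k) * real (n choose Suc k) = (real n - real k) * real (n choose k)"
  proof (cases "k \<le> n")
    case True
    then show ?thesis
      using arg_cong[OF Suc_times_binomial_eq_diff[of k n], of real] by (simp add: algebra_simps)
  qed (simp add: binomial_eq_0)
  then have "bernstein_power_coeff n (Suc k) (Suc k)
      = (real n - real k) * real (n choose k) * (fact k / real n ^ Suc k)"
    by (simp add: bernstein_power_coeff_def)
  also have "\<dots> = bernstein_power_coeff n k k * (1 - real k / real n)"
    using assms by (simp add: bernstein_power_coeff_def field_simps)
  finally show ?case
    using Suc by (simp add: falling_ratio_def)
qed (simp add: bernstein_power_coeff_def falling_ratio_def)

lemma real_Stirling_Suc_self: "real (Stirling (Suc k) k) = real (Suc k) * real k / 2"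
  by (induction k) (simp_all add: field_simps)

lemma bernstein_power_coeff_subdiag:
  assumes "n \<ge> 1"
  shows "bernstein_power_coeff n (Suc k) k = bernstein_sigma n (Suc k) * falling_ratio n k"
proof -
  have "bernstein_power_coeff n (Suc k) k = bernstein_sigma n (Suc k) * bernstein_power_coeff n k k"
    using assms unfolding bernstein_power_coeff_def bernstein_sigma_def real_Stirling_Suc_self
    by (simp add: field_simps)
  then show ?thesis
    using bernstein_power_coeff_diag[OF assms] by simp
qed

lemma falling_ratio_le_one:
  assumes "n \<ge> 1"
  shows "falling_ratio n k \<le> 1"
proof -
  have "bernstein_power_coeff n k k \<le> (\<Sum>i\<le>k. bernstein_power_coeff n k i)"
    by (rule member_le_sum) (simp_all add: bernstein_power_coeff_nonneg)
  then show ?thesis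
    using assms by (simp add: sum_bernstein_power_coeff bernstein_power_coeff_diag)
qed

lemma one_minus_sigma_le_falling_ratio:
  assumes "n \<ge> 1"
  shows "1 - bernstein_sigma n k \<le> falling_ratio n k"
proof (induction k)
  case (Suc k)
  define x where "x = real k / real n"
  have sigma_Suc: "bernstein_sigma n (Suc k) = bernstein_sigma n k + x"
    unfolding bernstein_sigma_def x_def using assms by (simp add: field_simps)
  show ?case
  proof (cases "k < n")
    case True
    then have "0 \<le> 1 - x"
      by (simp add: x_def)
    then have "(1 - bernstein_sigma n k) * (1 - x) \<le> falling_ratio n (Suc k)"
      using Suc by (simp add: falling_ratio_def x_def mult_right_mono)
    moreover have "0 \<le> bernstein_sigma n k * x"
      using bernstein_sigma_nonneg by (simp add: x_def)
    ultimately show ?thesis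
      unfolding sigma_Suc by (simp add: algebra_simps)
  next
    case False
    then have "falling_ratio n (Suc k) = 0"
      unfolding falling_ratio_def using assms by (auto intro!: prod_zero bexI[of _ n])
    moreover have "2 * real n \<le> real (Suc k) * real k"
      using False assms by (intro mult_mono) auto
    then have "1 \<le> bernstein_sigma n (Suc k)"
      using assms unfolding bernstein_sigma_def by (simp add: field_simps)
    ultimately show ?thesis
      by simp
  qed
qed (simp add: falling_ratio_def bernstein_sigma_def)

section \<open>Convex combinations of powers\<close>

lemma norm_power_le_of_le:
  fixes z :: "'a::real_normed_div_algebra"
  assumes "1 \<le> r" "norm z \<le> r" "i \<le> m"
  shows "norm (z ^ i) \<le> r ^ m"
proof -
  have "norm (z ^ i) \<le> r ^ i"
    unfolding norm_power using assms by (intro power_mono) auto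
  also have "\<dots> \<le> r ^ m"
    using assms by (intro power_increasing) auto
  finally show ?thesis .
qed

lemma norm_power_diff_le:
  fixes z :: "'a::real_normed_div_algebra"
  assumes "1 \<le> r" "norm z \<le> r" "i \<le> m"
  shows "norm (z ^ i - z ^ m) \<le> 2 * r ^ m"
  using norm_triangle_ineq4[of "z ^ i" "z ^ m"] norm_power_le_of_le[OF assms]
    norm_power_le_of_le[OF assms(1,2) order.refl, of m] by linarith

lemma convex_powers_sub_top_eq:
  fixes w :: "nat \<Rightarrow> real" and z :: complex
  assumes "(\<Sum>i\<le>m. w i) = 1"
  shows "(\<Sum>i\<le>m. of_real (w i) * z ^ i) - z ^ m = (\<Sum>i<m. of_real (w i) * (z ^ i - z ^ m))"
proof -
  have "z ^ m = (\<Sum>i\<le>m. of_real (w i) * z ^ m)"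
    using assms by (simp flip: sum_distrib_right of_real_sum)
  then have "(\<Sum>i\<le>m. of_real (w i) * z ^ i) - z ^ m = (\<Sum>i\<le>m. of_real (w i) * (z ^ i - z ^ m))"
    by (simp add: right_diff_distrib sum_subtractf)
  also have "\<dots> = (\<Sum>i<m. of_real (w i) * (z ^ i - z ^ m))"
    by (simp flip: lessThan_Suc_atMost)
  finally show ?thesis .
qed

lemma norm_sum_weighted_power_diff_le:
  fixes w :: "nat \<Rightarrow> real" and z :: complex
  assumes "\<And>i. i \<in> A \<Longrightarrow> 0 \<le> w i \<and> i \<le> m" "1 \<le> r" "norm z \<le> r"
  shows "norm (\<Sum>i\<in>A. of_real (w i) * (z ^ i - z ^ m)) \<le> 2 * r ^ m * (\<Sum>i\<in>A. w i)"
proof -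
  have "norm (\<Sum>i\<in>A. of_real (w i) * (z ^ i - z ^ m)) \<le> (\<Sum>i\<in>A. w i * (2 * r ^ m))"
  proof (rule sum_norm_le)
    fix i assume "i \<in> A"
    then show "norm (of_real (w i) * (z ^ i - z ^ m)) \<le> w i * (2 * r ^ m)"
      using assms norm_power_diff_le[OF assms(2,3), of i m]
      by (auto simp: norm_mult intro!: mult_left_mono)
  qed
  then show ?thesis
    by (simp add: sum_distrib_right mult_ac)
qed

lemma norm_convex_powers_sub_top_le:
  fixes w :: "nat \<Rightarrow> real" and z :: complex
  assumes "\<And>i. i \<le> m \<Longrightarrow> 0 \<le> w i" "(\<Sum>i\<le>m. w i) = 1" "1 - s \<le> w m"
    and "1 \<le> r" "norm z \<le> r"
  shows "norm ((\<Sum>i\<le>m. of_real (w i) * z ^ i) - z ^ m) \<le> 2 * s * r ^ m"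
proof -
  have "norm (\<Sum>i<m. of_real (w i) * (z ^ i - z ^ m)) \<le> 2 * r ^ m * (\<Sum>i<m. w i)"
    using assms by (intro norm_sum_weighted_power_diff_le) auto
  also have "(\<Sum>i<m. w i) = 1 - w m"
    using assms(2) by (simp flip: lessThan_Suc_atMost)
  also have "2 * r ^ m * (1 - w m) \<le> 2 * r ^ m * s"
    using assms(3,4) by (intro mult_left_mono) auto
  finally show ?thesis
    unfolding convex_powers_sub_top_eq[OF assms(2)] by (simp add: mult_ac)
qed

text \<open>The second-order term \<open>s (z\<^sup>m - z\<^sup>m\<^sup>+\<^sup>1)\<close> absorbs the weight at \<open>m\<close>;
  what remains is the mass \<open>1 - w (m+1) - w m \<le> s (1 - p)\<close> of the lower weights and the
  error \<open>s (1 - p)\<close> in the weight at \<open>m\<close>, both of order \<open>s\<^sup>2\<close>.\<close>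
lemma norm_convex_powers_second_order_le:
  fixes w :: "nat \<Rightarrow> real" and z :: complex
  assumes "\<And>i. i \<le> Suc m \<Longrightarrow> 0 \<le> w i" "(\<Sum>i\<le>Suc m. w i) = 1" "1 - s \<le> w (Suc m)"
    and "w m = s * p" "1 - s \<le> p" "p \<le> 1"
    and "1 \<le> r" "norm z \<le> r"
  shows "norm ((\<Sum>i\<le>Suc m. of_real (w i) * z ^ i) - z ^ Suc m - of_real s * (z ^ m - z ^ Suc m))
           \<le> 4 * s\<^sup>2 * r ^ Suc m"
proof -
  define R where "R = r ^ Suc m"
  have "w (Suc m) \<le> 1"
    using assms(1,2) member_le_sum[of "Suc m" "{..Suc m}" w] by simp
  then have "0 \<le> s"
    using assms(3) by linarith
  have lower_mass: "(\<Sum>i<m. w i) = 1 - w (Suc m) - w m"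
    using assms(2) by (simp flip: lessThan_Suc_atMost)
  have "(\<Sum>i\<le>Suc m. of_real (w i) * z ^ i) - z ^ Suc m - of_real s * (z ^ m - z ^ Suc m)
      = (\<Sum>i<m. of_real (w i) * (z ^ i - z ^ Suc m)) + of_real (w m - s) * (z ^ m - z ^ Suc m)"
    unfolding convex_powers_sub_top_eq[OF assms(2)] by (simp add: algebra_simps)
  also have "norm \<dots> \<le> 2 * R * (\<Sum>i<m. w i) + \<bar>w m - s\<bar> * (2 * R)"
  proof -
    have "norm (\<Sum>i<m. of_real (w i) * (z ^ i - z ^ Suc m)) \<le> 2 * R * (\<Sum>i<m. w i)"
      unfolding R_def using assms by (intro norm_sum_weighted_power_diff_le) auto
    moreover have "norm (of_real (w m - s) * (z ^ m - z ^ Suc m)) \<le> \<bar>w m - s\<bar> * (2 * R)"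
      unfolding norm_mult norm_of_real R_def
      using norm_power_diff_le[OF assms(7,8), of m "Suc m"] by (intro mult_left_mono) auto
    ultimately show ?thesis
      by (meson add_mono norm_triangle_le)
  qed
  also have "\<dots> = 2 * R * ((\<Sum>i<m. w i) + \<bar>w m - s\<bar>)"
    by (simp add: algebra_simps)
  also have "\<dots> \<le> 2 * R * (2 * s * s)"
  proof -
    have "0 \<le> s * (1 - p)"
      using \<open>0 \<le> s\<close> assms(6) by simp
    moreover have "w m - s = - (s * (1 - p))"
      using assms(4) by (simp add: algebra_simps)
    ultimately have "\<bar>w m - s\<bar> = s * (1 - p)"
      by simp
    moreover have "(\<Sum>i<m. w i) \<le> s * (1 - p)"
      using lower_mass assms(3,4) by (simp add: algebra_simps)
    moreover have "s * (1 - p) \<le> s * s"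
      using assms(5) \<open>0 \<le> s\<close> by (intro mult_left_mono) auto
    moreover have "0 \<le> R"
      using assms(7) by (simp add: R_def)
    ultimately show ?thesis
      by (intro mult_left_mono) auto
  qed
  finally show ?thesis
    by (simp add: R_def power2_eq_square mult_ac)
qed

section \<open>The product defect\<close>

lemma norm_bernstein_power_sub_power_le:
  assumes "n \<ge> 1" "1 \<le> r" "norm z \<le> r"
  shows "norm (bernstein n (\<lambda>x. of_real x ^ m) z - z ^ m) \<le> 2 * bernstein_sigma n m * r ^ m"
  unfolding bernstein_power_expansion
  using assms bernstein_power_coeff_nonneg sum_bernstein_power_coeff
    one_minus_sigma_le_falling_ratio bernstein_power_coeff_diag
  by (intro norm_convex_powers_sub_top_le) auto

definition bernstein_power_remainder :: "nat \<Rightarrow> nat \<Rightarrow> complex \<Rightarrow> complex" where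
  "bernstein_power_remainder n m z =
     bernstein n (\<lambda>x. of_real x ^ m) z - z ^ m - of_real (bernstein_sigma n m) * (z ^ (m - 1) - z ^ m)"

lemma norm_bernstein_power_remainder_le:
  assumes "n \<ge> 1" "1 \<le> r" "norm z \<le> r"
  shows "norm (bernstein_power_remainder n m z) \<le> 4 * (bernstein_sigma n m)\<^sup>2 * r ^ m"
  unfolding bernstein_power_remainder_def
proof (cases m)
  case 0
  then show "norm (bernstein n (\<lambda>x. of_real x ^ m) z - z ^ m
      - of_real (bernstein_sigma n m) * (z ^ (m - 1) - z ^ m)) \<le> 4 * (bernstein_sigma n m)\<^sup>2 * r ^ m"
    using bernstein_power_expansion[of n 0 z]
    by (simp add: bernstein_power_coeff_def bernstein_sigma_def)
next
  case (Suc k)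
  have top: "1 - bernstein_sigma n (Suc k) \<le> bernstein_power_coeff n (Suc k) (Suc k)"
    using one_minus_sigma_le_falling_ratio[OF assms(1)] bernstein_power_coeff_diag[OF assms(1)]
    by simp
  have "1 - bernstein_sigma n (Suc k) \<le> falling_ratio n k"
    using one_minus_sigma_le_falling_ratio[OF assms(1), of k] bernstein_sigma_le_Suc[of n k]
    by linarith
  then show "norm (bernstein n (\<lambda>x. of_real x ^ m) z - z ^ m
      - of_real (bernstein_sigma n m) * (z ^ (m - 1) - z ^ m)) \<le> 4 * (bernstein_sigma n m)\<^sup>2 * r ^ m"
    unfolding Suc bernstein_power_expansion diff_Suc_1
    by (rule norm_convex_powers_second_order_le[OF bernstein_power_coeff_nonneg
          sum_bernstein_power_coeff[OF assms(1)] top bernstein_power_coeff_subdiag[OF assms(1)]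
          _ falling_ratio_le_one[OF assms(1)] assms(2,3)])
qed

lemma bernstein_sigma_correction_identity:
  fixes z :: complex
  assumes "n \<ge> 1"
  shows "of_real (bernstein_sigma n (j + k)) * (z ^ (j + k - 1) - z ^ (j + k))
         - z ^ j * (of_real (bernstein_sigma n k) * (z ^ (k - 1) - z ^ k))
         - z ^ k * (of_real (bernstein_sigma n j) * (z ^ (j - 1) - z ^ j))
       = z * (1 - z) * (of_nat j * z ^ (j - 1)) * (of_nat k * z ^ (k - 1)) / of_nat n"
proof (cases "j = 0 \<or> k = 0")
  case True
  then show ?thesis
    by (auto simp: bernstein_sigma_def)
next
  case False
  then obtain a b where j: "j = Suc a" and k: "k = Suc b"
    by (metis not0_implies_Suc)
  define w where "w = z ^ (a + b + 1) * (1 - z)"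
  have powers: "z ^ (j + k - 1) - z ^ (j + k) = w" "z ^ j * (z ^ (k - 1) - z ^ k) = w"
      "z ^ k * (z ^ (j - 1) - z ^ j) = w"
    using j k by (simp_all add: w_def algebra_simps power_add)
  have "bernstein_sigma n (j + k) - bernstein_sigma n k - bernstein_sigma n j = real j * real k / real n"
    unfolding bernstein_sigma_def using assms by (simp add: field_simps)
  then have "of_real (bernstein_sigma n (j + k)) * w - of_real (bernstein_sigma n k) * w
      - of_real (bernstein_sigma n j) * w = of_real (real j * real k / real n) * w"
    by (metis left_diff_distrib of_real_diff)
  also have "\<dots> = z * (1 - z) * (of_nat j * z ^ (j - 1)) * (of_nat k * z ^ (k - 1)) / of_nat n"
  proof -
    have "(of_nat n :: complex) \<noteq> 0"
      using assms by simp
    then show ?thesis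
      using j k by (simp add: w_def field_simps power_add)
  qed
  finally show ?thesis
    by (simp only: powers mult.left_commute[of "z ^ _"])
qed

definition bernstein_defect ::
    "nat \<Rightarrow> complex \<Rightarrow> (real \<Rightarrow> complex) \<Rightarrow> (real \<Rightarrow> complex) \<Rightarrow> complex \<Rightarrow> complex \<Rightarrow> complex" where
  "bernstein_defect n z u v du dv =
     bernstein n (\<lambda>x. u x * v x) z - bernstein n u z * bernstein n v z - z * (1 - z) * du * dv / of_nat n"

lemma bernstein_defect_powers_eq:
  fixes z :: complex
  assumes "n \<ge> 1"
  shows "bernstein_defect n z (\<lambda>x. of_real x ^ j) (\<lambda>x. of_real x ^ k)
           (of_nat j * z ^ (j - 1)) (of_nat k * z ^ (k - 1))
         = bernstein_power_remainder n (j + k) z - z ^ j * bernstein_power_remainder n k z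
           - z ^ k * bernstein_power_remainder n j z
           - (bernstein n (\<lambda>x. of_real x ^ j) z - z ^ j) * (bernstein n (\<lambda>x. of_real x ^ k) z - z ^ k)"
proof -
  define u where "u m = of_real (bernstein_sigma n m) * (z ^ (m - 1) - z ^ m)" for m
  have B: "bernstein n (\<lambda>x. of_real x ^ m) z = z ^ m + u m + bernstein_power_remainder n m z" for m
    by (simp add: bernstein_power_remainder_def u_def)
  have correction: "u (j + k) - z ^ j * u k - z ^ k * u j
      = z * (1 - z) * (of_nat j * z ^ (j - 1)) * (of_nat k * z ^ (k - 1)) / of_nat n"
    unfolding u_def by (rule bernstein_sigma_correction_identity[OF assms])
  show ?thesis
    unfolding bernstein_defect_def power_add[symmetric] B correction[symmetric]
    by (simp add: algebra_simps power_add)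
qed

lemma norm_bernstein_defect_powers_le:
  fixes z :: complex
  assumes "n \<ge> 1" "1 \<le> r" "norm z \<le> r"
  shows "norm (bernstein_defect n z (\<lambda>x. of_real x ^ j) (\<lambda>x. of_real x ^ k)
                 (of_nat j * z ^ (j - 1)) (of_nat k * z ^ (k - 1)))
         \<le> 4 / real n ^ 2 * ((real j + 1) ^ 4 * r ^ j) * ((real k + 1) ^ 4 * r ^ k)"
proof -
  define d where "d m = bernstein n (\<lambda>x. of_real x ^ m) z - z ^ m" for m
  define e where "e m = bernstein_power_remainder n m z" for m
  define M where "M = ((real j + 1) * (real k + 1)) ^ 2 / (2 * real n)"
  have sigma_le_M: "bernstein_sigma n m \<le> M" if "m \<le> Suc j * Suc k" for m
    using bernstein_sigma_le[OF that, of n] unfolding M_def of_nat_mult of_nat_Suc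
    by (simp add: add.commute)
  have small: "j \<le> Suc j * Suc k" "k \<le> Suc j * Suc k" "j + k \<le> Suc j * Suc k"
    by simp_all
  have norm_e: "norm (e m) \<le> 4 * M\<^sup>2 * r ^ m" if "m \<le> Suc j * Suc k" for m
    using norm_bernstein_power_remainder_le[OF assms, of m] sigma_le_M[OF that]
      bernstein_sigma_nonneg[of n m] assms(2) unfolding e_def
    by (smt (verit) mult_right_mono power_mono zero_le_power)
  have norm_d: "norm (d m) \<le> 2 * M * r ^ m" if "m \<le> Suc j * Suc k" for m
    using norm_bernstein_power_sub_power_le[OF assms, of m] sigma_le_M[OF that] assms(2)
    unfolding d_def by (smt (verit) mult_right_mono zero_le_power)
  have norm_z: "norm (z ^ m) \<le> r ^ m" for m
    using norm_power_le_of_le[OF assms(2,3) order.refl] .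
  have "norm (e (j + k) - z ^ j * e k - z ^ k * e j - d j * d k)
      \<le> norm (e (j + k)) + norm (z ^ j) * norm (e k) + norm (z ^ k) * norm (e j) + norm (d j) * norm (d k)"
    using norm_triangle_ineq4[of "e (j + k) - z ^ j * e k - z ^ k * e j" "d j * d k"]
      norm_triangle_ineq4[of "e (j + k) - z ^ j * e k" "z ^ k * e j"]
      norm_triangle_ineq4[of "e (j + k)" "z ^ j * e k"]
    by (simp add: norm_mult)
  also have "\<dots> \<le> 4 * M\<^sup>2 * r ^ (j + k) + r ^ j * (4 * M\<^sup>2 * r ^ k) + r ^ k * (4 * M\<^sup>2 * r ^ j)
      + (2 * M * r ^ j) * (2 * M * r ^ k)"
    using norm_e[OF small(3)] norm_e[OF small(1)] norm_e[OF small(2)]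
      norm_d[OF small(1)] norm_d[OF small(2)] norm_z[of j] norm_z[of k] assms(2)
    by (intro add_mono mult_mono) (auto simp: M_def)
  also have "\<dots> = 16 * M\<^sup>2 * (r ^ j * r ^ k)"
    by (simp add: power_add power2_eq_square algebra_simps)
  also have "M\<^sup>2 = (real j + 1) ^ 4 * (real k + 1) ^ 4 / (4 * real n ^ 2)"
    unfolding M_def by (simp add: power_divide power_mult_distrib flip: power_mult)
  also have "16 * ((real j + 1) ^ 4 * (real k + 1) ^ 4 / (4 * real n ^ 2)) * (r ^ j * r ^ k)
      = 4 / real n ^ 2 * ((real j + 1) ^ 4 * r ^ j) * ((real k + 1) ^ 4 * r ^ k)"
    by (simp add: field_simps)
  finally show ?thesis
    unfolding bernstein_defect_powers_eq[OF assms(1)] d_def e_def .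
qed

lemma bernstein_defect_commute: "bernstein_defect n z u v du dv = bernstein_defect n z v u dv du"
  unfolding bernstein_defect_def by (simp add: mult.commute)

lemma bernstein_defect_sums:
  assumes "\<And>m. m \<le> n \<Longrightarrow> (\<lambda>j. a j * U j (real m / real n)) sums u (real m / real n)"
    and "(\<lambda>j. a j * D j) sums du"
  shows "(\<lambda>j. a j * bernstein_defect n z (U j) v (D j) dv) sums bernstein_defect n z u v du dv"
proof -
  define x where "x m = real m / real n" for m
  have "(\<lambda>j. (\<Sum>m\<le>n. bernstein_basis n m z * v (x m) * (a j * U j (x m)))
            - (\<Sum>m\<le>n. bernstein_basis n m z * (a j * U j (x m))) * bernstein n v z
            - z * (1 - z) * (a j * D j) * dv / of_nat n)
        sums ((\<Sum>m\<le>n. bernstein_basis n m z * v (x m) * u (x m))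
              - (\<Sum>m\<le>n. bernstein_basis n m z * u (x m)) * bernstein n v z
              - z * (1 - z) * du * dv / of_nat n)"
    using assms unfolding x_def
    by (intro sums_diff sums_mult2 sums_sum sums_mult sums_divide) auto
  then show ?thesis
    by (simp add: bernstein_defect_def bernstein_eq_sum_basis x_def sum_distrib_left algebra_simps)
qed

lemma norm_bernstein_defect_le_series:
  assumes "\<And>m. m \<le> n \<Longrightarrow> (\<lambda>j. a j * U j (real m / real n)) sums u (real m / real n)"
    and "(\<lambda>j. a j * D j) sums du"
    and "summable (\<lambda>j. norm (a j) * c j)"
    and "\<And>j. norm (bernstein_defect n z (U j) v (D j) dv) \<le> K * c j"
  shows "norm (bernstein_defect n z u v du dv) \<le> K * (\<Sum>j. norm (a j) * c j)"
proof -
  have "norm (bernstein_defect n z u v du dv) = norm (\<Sum>j. a j * bernstein_defect n z (U j) v (D j) dv)"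
    using bernstein_defect_sums[where U = U and D = D, OF _ assms(2)] assms(1)
    by (simp add: sums_iff)
  also have "\<dots> \<le> (\<Sum>j. K * (norm (a j) * c j))"
  proof (rule norm_suminf_le)
    fix j
    show "norm (a j * bernstein_defect n z (U j) v (D j) dv) \<le> K * (norm (a j) * c j)"
      unfolding norm_mult using mult_left_mono[OF assms(4), of "norm (a j)"] by (simp add: mult_ac)
  qed (intro summable_mult assms(3))
  also have "\<dots> = K * (\<Sum>j. norm (a j) * c j)"
    by (rule suminf_mult[OF assms(3)])
  finally show ?thesis .
qed

lemma norm_bernstein_defect_le_double_series:
  assumes "\<And>m. m \<le> n \<Longrightarrow> (\<lambda>j. a j * U j (real m / real n)) sums u (real m / real n)"
    and "(\<lambda>j. a j * D j) sums du"
    and "\<And>m. m \<le> n \<Longrightarrow> (\<lambda>k. b k * U k (real m / real n)) sums v (real m / real n)"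
    and "(\<lambda>k. b k * D k) sums dv"
    and "summable (\<lambda>j. norm (a j) * c j)" "summable (\<lambda>k. norm (b k) * c k)"
    and "\<And>j k. norm (bernstein_defect n z (U j) (U k) (D j) (D k)) \<le> K * c j * c k"
  shows "norm (bernstein_defect n z u v du dv)
           \<le> K * (\<Sum>j. norm (a j) * c j) * (\<Sum>k. norm (b k) * c k)"
proof -
  have inner: "norm (bernstein_defect n z (U j) v (D j) dv) \<le> K * (\<Sum>k. norm (b k) * c k) * c j" for j
  proof -
    have swapped: "norm (bernstein_defect n z (U k) (U j) (D k) (D j)) \<le> K * c j * c k" for k
      using assms(7)[of j k] by (simp only: bernstein_defect_commute[of n z "U k"])
    have "norm (bernstein_defect n z v (U j) dv (D j)) \<le> K * c j * (\<Sum>k. norm (b k) * c k)"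
      by (rule norm_bernstein_defect_le_series[where U = U and D = D, OF _ assms(4,6) swapped])
         (use assms(3) in blast)
    then show ?thesis
      by (simp add: bernstein_defect_commute[of n z "U j"] mult_ac)
  qed
  have "norm (bernstein_defect n z u v du dv) \<le> K * (\<Sum>k. norm (b k) * c k) * (\<Sum>j. norm (a j) * c j)"
    by (rule norm_bernstein_defect_le_series[where U = U and D = D, OF _ assms(2,5) inner])
       (use assms(1) in blast)
  then show ?thesis
    by (simp add: mult_ac)
qed

section \<open>Taylor expansions\<close>

lemma summable_poly_times_geometric:
  fixes q :: real
  assumes "\<bar>q\<bar> < 1"
  shows "summable (\<lambda>j. (real j + 1) ^ p * q ^ j)"
proof -
  have "conv_radius (\<lambda>j. (real j + 1) ^ p) = 1"
    by (rule conv_radius_ratio_limit_nonzero[of _ 1]) (simp_all, real_asymp)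
  then show ?thesis
    using assms by (intro summable_in_conv_radius) simp
qed

lemma summable_norm_taylor_coeff_mult_poly:
  fixes f :: "complex \<Rightarrow> complex"
  assumes "f holomorphic_on ball 0 R" "0 \<le> r" "r < R"
  shows "summable (\<lambda>j. norm ((deriv ^^ j) f 0 / fact j) * ((real j + 1) ^ p * r ^ j))"
proof -
  define \<rho> where "\<rho> = (r + R) / 2"
  have \<rho>: "r < \<rho>" "\<rho> < R"
    using assms by (auto simp: \<rho>_def)
  have "cball 0 \<rho> \<subseteq> ball (0::complex) R"
    using \<rho> by auto
  then have "continuous_on (cball 0 \<rho>) f"
    using holomorphic_on_imp_continuous_on[OF assms(1)] continuous_on_subset by blast
  then have "bounded (f ` cball 0 \<rho>)"
    by (intro compact_imp_bounded compact_continuous_image compact_cball)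
  then obtain B where B: "\<And>w. w \<in> cball 0 \<rho> \<Longrightarrow> norm (f w) \<le> B"
    unfolding bounded_iff by (metis image_eqI)
  have coeff: "norm ((deriv ^^ j) f 0 / fact j) \<le> B / \<rho> ^ j" for j
  proof -
    have "norm ((deriv ^^ j) f 0) \<le> fact j * B / \<rho> ^ j"
      using \<rho> assms(2) B \<open>continuous_on (cball 0 \<rho>) f\<close>
      by (intro Cauchy_inequality holomorphic_on_subset[OF assms(1)]) auto
    then show ?thesis
      by (simp add: norm_divide field_simps)
  qed
  have "summable (\<lambda>j. B * ((real j + 1) ^ p * (r / \<rho>) ^ j))"
    using \<rho> assms(2) by (intro summable_mult summable_poly_times_geometric) auto
  then show ?thesis
  proof (rule summable_comparison_test')
    fix j
    have "norm ((deriv ^^ j) f 0 / fact j) * ((real j + 1) ^ p * r ^ j)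
        \<le> B / \<rho> ^ j * ((real j + 1) ^ p * r ^ j)"
      using coeff assms(2) by (intro mult_right_mono) auto
    also have "\<dots> = B * ((real j + 1) ^ p * (r / \<rho>) ^ j)"
      by (simp add: field_simps)
    finally show "norm (norm ((deriv ^^ j) f 0 / fact j) * ((real j + 1) ^ p * r ^ j))
        \<le> B * ((real j + 1) ^ p * (r / \<rho>) ^ j)"
      using assms(2) by simp
  qed
qed

lemma holomorphic_power_series_real:
  fixes f :: "complex \<Rightarrow> complex"
  assumes "f holomorphic_on ball 0 R" "\<bar>x\<bar> < R"
  shows "(\<lambda>j. (deriv ^^ j) f 0 / fact j * of_real x ^ j) sums f (of_real x)"
  using holomorphic_power_series[OF assms(1), of "of_real x"] assms(2) by simp

lemma holomorphic_deriv_power_series: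
  fixes f :: "complex \<Rightarrow> complex"
  assumes "f holomorphic_on ball 0 R" "z \<in> ball 0 R"
  shows "(\<lambda>j. (deriv ^^ j) f 0 / fact j * (of_nat j * z ^ (j - 1))) sums deriv f z"
proof -
  define t where "t j = (deriv ^^ j) f 0 / fact j * (of_nat j * z ^ (j - 1))" for j
  have "deriv f holomorphic_on ball 0 R"
    by (rule holomorphic_deriv[OF assms(1) open_ball])
  then have "(\<lambda>j. (deriv ^^ j) (deriv f) 0 / fact j * (z - 0) ^ j) sums deriv f z"
    using assms(2) by (rule holomorphic_power_series)
  moreover have "t (Suc j) = (deriv ^^ j) (deriv f) 0 / fact j * (z - 0) ^ j" for j
    unfolding t_def funpow_Suc_right comp_def by (simp add: field_simps del: of_nat_Suc)
  ultimately have "(\<lambda>j. t (Suc j)) sums deriv f z"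
    by simp
  then have "t sums (deriv f z + t 0)"
    by (simp add: sums_Suc_iff)
  then show ?thesis
    unfolding t_def by simp
qed

theorem theorem4p2:
  fixes f g :: "complex \<Rightarrow> complex" and r R :: real
  assumes "1 \<le> r" and "r < R"
    and "f holomorphic_on ball 0 R" and "g holomorphic_on ball 0 R"
  shows "\<exists>C. \<forall>n::nat. n \<ge> 1 \<longrightarrow> (\<forall>z. cmod z \<le> r \<longrightarrow>
           cmod (bernstein n (\<lambda>x. f (of_real x) * g (of_real x)) z
                 - bernstein n (\<lambda>x. f (of_real x)) z * bernstein n (\<lambda>x. g (of_real x)) z
                 - z * (1 - z) * deriv f z * deriv g z / of_nat n)
           \<le> C / (real n)^2)"
proof -
  define a where "a j = (deriv ^^ j) f 0 / fact j" for j
  define b where "b j = (deriv ^^ j) g 0 / fact j" for j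
  define c where "c j = (real j + 1) ^ 4 * r ^ j" for j
  let ?Sf = "\<Sum>j. norm (a j) * c j" and ?Sg = "\<Sum>j. norm (b j) * c j"
  have "norm (bernstein_defect n z (\<lambda>x. f (of_real x)) (\<lambda>x. g (of_real x)) (deriv f z) (deriv g z))
          \<le> 4 / real n ^ 2 * ?Sf * ?Sg" if "n \<ge> 1" "norm z \<le> r" for n z
  proof (rule norm_bernstein_defect_le_double_series)
    fix m assume "m \<le> n"
    then have "real m / real n \<le> 1"
      using that(1) by (simp add: divide_le_eq_1)
    then have "\<bar>real m / real n\<bar> < R"
      using assms(1,2) by simp
    from holomorphic_power_series_real[OF assms(3) this] holomorphic_power_series_real[OF assms(4) this]
    show "(\<lambda>j. a j * of_real (real m / real n) ^ j) sums f (of_real (real m / real n))"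
      "(\<lambda>j. b j * of_real (real m / real n) ^ j) sums g (of_real (real m / real n))"
      unfolding a_def b_def .
  next
    have "z \<in> ball 0 R"
      using that(2) assms(2) by simp
    from holomorphic_deriv_power_series[OF assms(3) this] holomorphic_deriv_power_series[OF assms(4) this]
    show "(\<lambda>j. a j * (of_nat j * z ^ (j - 1))) sums deriv f z"
      "(\<lambda>j. b j * (of_nat j * z ^ (j - 1))) sums deriv g z"
      unfolding a_def b_def .
  next
    show "summable (\<lambda>j. norm (a j) * c j)" "summable (\<lambda>j. norm (b j) * c j)"
      using assms unfolding a_def b_def c_def by (auto intro!: summable_norm_taylor_coeff_mult_poly)
  next
    show "norm (bernstein_defect n z (\<lambda>x. of_real x ^ j) (\<lambda>x. of_real x ^ k)
              (of_nat j * z ^ (j - 1)) (of_nat k * z ^ (k - 1))) \<le> 4 / real n ^ 2 * c j * c k" for j k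
      unfolding c_def using norm_bernstein_defect_powers_le[OF that(1) assms(1) that(2)] .
  qed
  then show ?thesis
    by (intro exI[of _ "4 * ?Sf * ?Sg"]) (simp add: bernstein_defect_def)
qed

end
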